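(* Let $\Gamma=\bigcup_i\gamma_i$ be an admissible finite collection of transverse unobstructed curves in $\Sigma$ and let $u\in C_2^+(\Sigma;\mathbb{R})$. Then $(u+H_{\mathbb{R}})\cap C_2^+(\Sigma;\mathbb{R})$ is compact.
   Context: $\Sigma$ is a closed oriented surface of genus at least two; unobstructed curves are oriented immersed closed curves whose lifts to the universal cover are properly embedded lines. $C=C_2(\Sigma;\mathbb{Z})$ is the free $\mathbb{Z}$-module with basis the connected components of $\Sigma\setminus\Gamma$, $C_2(\Sigma;\mathbb{R})=C\otimes\mathbb{R}$, and $C_2^+(\Sigma;\mathbb{R})$ is the cone of elements with all coordinates nonnegative. The Euler measure $e(S)$ of a surface with corners is $\frac{1}{2\pi}$ times the integral of the curvature of a metric for which the boundary is geodesic and corners are right angles; it extends to a linear form $e$ on $C$. $H\subset C$ is the subgroup of $2$-chains in $\ker e$ whose boundary is a linear combination of the $\gamma_i$, and $H_{\mathbb{R}}$ is its $\mathbb{R}$-span. $\Gamma$ is admissible iff every nonzero $b\in H$ has both positive and negative coordinates. *)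

theory Defs
  imports "HOL-Analysis.Analysis"
begin

text \<open>Abstract cellular model of the complement of \<Gamma> in \<Sigma>.
  'r : the (finitely many) connected components (regions) of \<Sigma> minus \<Gamma>;
       integer 2-chains C = C_2(\<Sigma>;Z) are functions 'r => int, real 2-chains
       C_2(\<Sigma>;R) are vectors real^'r.
  'e : the edges of the cell structure induced by \<Gamma>; integer 1-chains are 'e => int.
  bd r ed : coefficient of edge ed in the (oriented) boundary of region r.
  gam i : the 1-chain carried by the oriented curve \<gamma>_i.
  eul r : Euler measure e of region r.\<close>

definition bdry :: "('r::finite \<Rightarrow> 'e \<Rightarrow> int) \<Rightarrow> ('r \<Rightarrow> int) \<Rightarrow> 'e \<Rightarrow> int" where
  "bdry bd b = (\<lambda>ed. \<Sum>r\<in>UNIV. b r * bd r ed)"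

definition euler :: "('r::finite \<Rightarrow> real) \<Rightarrow> ('r \<Rightarrow> int) \<Rightarrow> real" where
  "euler eul b = (\<Sum>r\<in>UNIV. real_of_int (b r) * eul r)"

definition Hgrp :: "('r::finite \<Rightarrow> real) \<Rightarrow> ('r \<Rightarrow> 'e \<Rightarrow> int) \<Rightarrow> ('i::finite \<Rightarrow> 'e \<Rightarrow> int)
    \<Rightarrow> ('r \<Rightarrow> int) set" where
  "Hgrp eul bd gam = {b. euler eul b = 0 \<and>
      (\<exists>c :: 'i \<Rightarrow> int. bdry bd b = (\<lambda>ed. \<Sum>i\<in>UNIV. c i * gam i ed))}"

definition to_real_chain :: "('r::finite \<Rightarrow> int) \<Rightarrow> real^'r" where
  "to_real_chain b = (\<chi> r. real_of_int (b r))"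

definition HR :: "('r::finite \<Rightarrow> real) \<Rightarrow> ('r \<Rightarrow> 'e \<Rightarrow> int) \<Rightarrow> ('i::finite \<Rightarrow> 'e \<Rightarrow> int)
    \<Rightarrow> (real^'r) set" where
  "HR eul bd gam = span (to_real_chain ` Hgrp eul bd gam)"

definition C2plus :: "(real^'r::finite) set" where
  "C2plus = {x. \<forall>r. 0 \<le> x $ r}"

definition admissible :: "('r::finite \<Rightarrow> real) \<Rightarrow> ('r \<Rightarrow> 'e \<Rightarrow> int) \<Rightarrow> ('i::finite \<Rightarrow> 'e \<Rightarrow> int)
    \<Rightarrow> bool" where
  "admissible eul bd gam \<longleftrightarrow>
     (\<forall>b\<in>Hgrp eul bd gam. b \<noteq> (\<lambda>_. 0) \<longrightarrow> (\<exists>r. 0 < b r) \<and> (\<exists>r. b r < 0))"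

end

theory Submission
  imports Defs
begin

(* Admissibility forces H_R to meet the closed orthant C_2^+ only in 0: a nonzero nonnegative
   element of H_R has the sign pattern of a rational combination of elements of H, because the
   rational solutions of linear equations with rational coefficients are dense among the real
   ones, and clearing denominators gives a nonzero nonnegative element of H. By compactness of
   the unit sphere of H_R, the negative part of every h in H_R then dominates a fixed multiple
   of its norm, so u + h >= 0 bounds h. Hence the slice is closed and bounded. *)

lemma abs_sum_mult_diff_le:
  fixes a mu lam :: "'v \<Rightarrow> real"
  assumes "\<forall>v\<in>I. \<bar>mu v - lam v\<bar> \<le> d"
  shows "\<bar>(\<Sum>v\<in>I. a v * mu v) - (\<Sum>v\<in>I. a v * lam v)\<bar> \<le> (\<Sum>v\<in>I. \<bar>a v\<bar>) * d"
proof -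
  have "\<bar>(\<Sum>v\<in>I. a v * mu v) - (\<Sum>v\<in>I. a v * lam v)\<bar> = \<bar>\<Sum>v\<in>I. a v * (mu v - lam v)\<bar>"
    by (simp add: sum_subtractf right_diff_distrib)
  also have "\<dots> \<le> (\<Sum>v\<in>I. \<bar>a v\<bar> * \<bar>mu v - lam v\<bar>)"
    unfolding abs_mult[symmetric] by (rule sum_abs)
  also have "\<dots> \<le> (\<Sum>v\<in>I. \<bar>a v\<bar> * d)"
    using assms by (intro sum_mono mult_left_mono) auto
  finally show ?thesis
    by (simp add: sum_distrib_right)
qed

lemma approx_solution_fun_upd:
  fixes mu lam :: "'v \<Rightarrow> real"
  assumes "finite I" "j \<notin> I"
    and "\<forall>v\<in>I. mu v \<in> \<rat> \<and> \<bar>mu v - lam v\<bar> < e" "q \<in> \<rat>" "\<bar>q - lam j\<bar> < e"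
    and "\<forall>a\<in>E. a j * q + (\<Sum>v\<in>I. a v * mu v) = 0"
  shows "(\<forall>v\<in>insert j I. (mu(j := q)) v \<in> \<rat> \<and> \<bar>(mu(j := q)) v - lam v\<bar> < e)
    \<and> (\<forall>a\<in>E. (\<Sum>v\<in>insert j I. a v * (mu(j := q)) v) = 0)"
proof
  show "\<forall>v\<in>insert j I. (mu(j := q)) v \<in> \<rat> \<and> \<bar>(mu(j := q)) v - lam v\<bar> < e"
    using assms(2-5) by auto
  have "(\<Sum>v\<in>I. a v * (mu(j := q)) v) = (\<Sum>v\<in>I. a v * mu v)" for a
    using assms(2) by (intro sum.cong) auto
  then show "\<forall>a\<in>E. (\<Sum>v\<in>insert j I. a v * (mu(j := q)) v) = 0"
    using assms(1,2,6) by simp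
qed

lemma sum_diff_scaled_mult:
  fixes a b f :: "'v \<Rightarrow> 'a::comm_ring"
  shows "(\<Sum>v\<in>I. (a v - c * b v) * f v) = (\<Sum>v\<in>I. a v * f v) - c * (\<Sum>v\<in>I. b v * f v)"
  by (simp add: algebra_simps sum_subtractf sum_distrib_left)

lemma pivot_extension:
  fixes a0 lam mu :: "'v \<Rightarrow> real"
  assumes "finite I" "j \<notin> I" "a0 \<in> E" "a0 j \<noteq> 0"
    and "\<forall>a\<in>E. \<forall>v\<in>insert j I. a v \<in> \<rat>"
    and "\<forall>a\<in>E. (\<Sum>v\<in>insert j I. a v * lam v) = 0"
    and "\<forall>v\<in>I. mu v \<in> \<rat> \<and> \<bar>mu v - lam v\<bar> \<le> d"
    and "\<forall>a\<in>E. (\<Sum>v\<in>I. (a v - a j / a0 j * a0 v) * mu v) = 0"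
  defines "q \<equiv> - (\<Sum>v\<in>I. a0 v * mu v) / a0 j"
  shows "q \<in> \<rat>"
    and "\<bar>q - lam j\<bar> \<le> (\<Sum>v\<in>I. \<bar>a0 v\<bar>) * d / \<bar>a0 j\<bar>"
    and "\<forall>a\<in>E. a j * q + (\<Sum>v\<in>I. a v * mu v) = 0"
proof -
  show "q \<in> \<rat>"
    unfolding q_def using assms(3,5,7) by (auto intro!: Rats_divide Rats_sum Rats_mult)
  have "(\<Sum>v\<in>I. a0 v * lam v) = - a0 j * lam j"
    using assms(1-3,6) by auto
  then have "q - lam j = - ((\<Sum>v\<in>I. a0 v * mu v) - (\<Sum>v\<in>I. a0 v * lam v)) / a0 j"
    using assms(4) by (simp add: q_def field_simps)
  then show "\<bar>q - lam j\<bar> \<le> (\<Sum>v\<in>I. \<bar>a0 v\<bar>) * d / \<bar>a0 j\<bar>"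
    using abs_sum_mult_diff_le[of I mu lam d a0] assms(7)
    by (simp add: abs_divide divide_right_mono)
  show "\<forall>a\<in>E. a j * q + (\<Sum>v\<in>I. a v * mu v) = 0"
  proof
    fix a assume "a \<in> E"
    then have "(\<Sum>v\<in>I. a v * mu v) - a j / a0 j * (\<Sum>v\<in>I. a0 v * mu v) = 0"
      using assms(8) unfolding sum_diff_scaled_mult by blast
    then show "a j * q + (\<Sum>v\<in>I. a v * mu v) = 0"
      using assms(4) unfolding q_def by (simp add: field_simps)
  qed
qed

lemma rational_solutions_dense:
  fixes lam :: "'v \<Rightarrow> real" and E :: "('v \<Rightarrow> real) set"
  assumes "finite I"
    and "\<forall>a\<in>E. \<forall>v\<in>I. a v \<in> \<rat>"
    and "\<forall>a\<in>E. (\<Sum>v\<in>I. a v * lam v) = 0"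
    and "e > 0"
  shows "\<exists>mu. (\<forall>v\<in>I. mu v \<in> \<rat> \<and> \<bar>mu v - lam v\<bar> < e) \<and> (\<forall>a\<in>E. (\<Sum>v\<in>I. a v * mu v) = 0)"
  using assms
proof (induction I arbitrary: E lam e rule: finite_induct)
  case empty
  then show ?case by auto
next
  case (insert j I)
  note rat = insert.prems(1) and eqs = insert.prems(2) and e = insert.prems(3)
  show ?case
  proof (cases "\<forall>a\<in>E. a j = 0")
    case True
    then have "\<forall>a\<in>E. (\<Sum>v\<in>I. a v * lam v) = 0"
      using eqs insert.hyps by (metis add_0 mult_zero_left sum.insert)
    then obtain mu where mu: "\<forall>v\<in>I. mu v \<in> \<rat> \<and> \<bar>mu v - lam v\<bar> < e"
      "\<forall>a\<in>E. (\<Sum>v\<in>I. a v * mu v) = 0"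
      using insert.IH[of E lam e] rat e by auto
    obtain q where q: "q \<in> \<rat>" "lam j < q" "q < lam j + e"
      using Rats_dense_in_real[of "lam j" "lam j + e"] e by auto
    have q_close: "\<bar>q - lam j\<bar> < e"
      using q by simp
    have q_solves: "\<forall>a\<in>E. a j * q + (\<Sum>v\<in>I. a v * mu v) = 0"
      using mu(2) True by simp
    show ?thesis
      using approx_solution_fun_upd[OF insert.hyps mu(1) q(1) q_close q_solves]
      by (rule exI[of _ "mu(j := q)"])
  next
    case False
    then obtain a0 where a0: "a0 \<in> E" "a0 j \<noteq> 0" by auto
    \<comment> \<open>Gaussian elimination: use the equation a0 to eliminate the variable j.\<close>
    define elim where "elim a = (\<lambda>v. a v - a j / a0 j * a0 v)" for a :: "'v \<Rightarrow> real"
    have eqs_I: "(\<Sum>v\<in>I. a v * lam v) = - a j * lam j" if "a \<in> E" for a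
      using eqs that insert.hyps by auto
    have rat': "\<forall>a\<in>elim ` E. \<forall>v\<in>I. a v \<in> \<rat>"
      using rat a0 unfolding elim_def by (auto intro!: Rats_diff Rats_mult Rats_divide)
    have "(\<Sum>v\<in>I. elim a v * lam v) = 0" if "a \<in> E" for a
      using eqs_I[OF that] eqs_I[OF a0(1)] a0(2) unfolding elim_def sum_diff_scaled_mult by simp
    then have eqs': "\<forall>a\<in>elim ` E. (\<Sum>v\<in>I. a v * lam v) = 0"
      by blast
    define M where "M = (\<Sum>v\<in>I. \<bar>a0 v\<bar>) / \<bar>a0 j\<bar>"
    have "M \<ge> 0"
      unfolding M_def by (simp add: sum_nonneg)
    define e' where "e' = e / (1 + M)"
    have e': "e' > 0" "e' \<le> e" "M * e' < e"
      using e \<open>M \<ge> 0\<close> unfolding e'_def by (auto simp: field_simps)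
    obtain mu where mu: "\<forall>v\<in>I. mu v \<in> \<rat> \<and> \<bar>mu v - lam v\<bar> < e'"
      "\<forall>a\<in>elim ` E. (\<Sum>v\<in>I. a v * mu v) = 0"
      using insert.IH[OF rat' eqs' e'(1)] by auto
    have mu_le: "\<forall>v\<in>I. mu v \<in> \<rat> \<and> \<bar>mu v - lam v\<bar> \<le> e'"
      using mu(1) by (auto intro: less_imp_le)
    have mu_elim: "\<forall>a\<in>E. (\<Sum>v\<in>I. (a v - a j / a0 j * a0 v) * mu v) = 0"
      using mu(2) unfolding elim_def by auto
    define q where "q = - (\<Sum>v\<in>I. a0 v * mu v) / a0 j"
    note pivot = pivot_extension[OF insert.hyps a0 rat eqs mu_le mu_elim, folded q_def]
    have q_close: "\<bar>q - lam j\<bar> < e"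
      using pivot(2) e'(3) unfolding M_def by (simp add: field_simps)
    have mu_close: "\<forall>v\<in>I. mu v \<in> \<rat> \<and> \<bar>mu v - lam v\<bar> < e"
      using mu(1) e'(2) by auto
    show ?thesis
      using approx_solution_fun_upd[OF insert.hyps mu_close pivot(1) q_close pivot(3)]
      by (rule exI[of _ "mu(j := q)"])
  qed
qed

lemma Rats_common_denominator:
  assumes "finite B" "\<forall>b\<in>B. f b \<in> \<rat>"
  shows "\<exists>N::nat. N > 0 \<and> (\<forall>b\<in>B. real N * f b \<in> \<int>)"
  using assms
proof (induction B rule: finite_induct)
  case empty
  then show ?case by (auto intro!: exI[of _ 1])
next
  case (insert x B)
  then obtain N where N: "N > 0" "\<forall>b\<in>B. real N * f b \<in> \<int>" by auto
  obtain p q where pq: "q > 0" "f x = of_int p / of_int q"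
    using insert.prems by (auto elim: Rats_cases')
  have "real (N * nat q) * f b = real (nat q) * (real N * f b)" for b
    by simp
  then have "real (N * nat q) * f b \<in> \<int>" if "b \<in> B" for b
    using N(2) that by (metis Ints_mult Ints_of_nat)
  moreover have "real (N * nat q) * f x \<in> \<int>"
    using pq by simp
  ultimately show ?case
    using N(1) pq(1) by (intro exI[of _ "N * nat q"]) auto
qed

lemma Hgrp_sum_closed:
  assumes "\<forall>b\<in>B. h b \<in> Hgrp eul bd gam"
  shows "(\<lambda>r. \<Sum>b\<in>B. m b * h b r) \<in> Hgrp eul bd gam"
proof -
  have "\<forall>b\<in>B. \<exists>c. bdry bd (h b) = (\<lambda>ed. \<Sum>i\<in>UNIV. c i * gam i ed)"
    using assms unfolding Hgrp_def by blast
  from bchoice[OF this] obtain c where c: "\<forall>b\<in>B. bdry bd (h b) = (\<lambda>ed. \<Sum>i\<in>UNIV. c b i * gam i ed)"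
    by blast
  have "euler eul (\<lambda>r. \<Sum>b\<in>B. m b * h b r) = (\<Sum>b\<in>B. real_of_int (m b) * euler eul (h b))"
    unfolding euler_def of_int_sum sum_distrib_right sum_distrib_left
    by (subst sum.swap) (simp add: mult.assoc)
  also have "\<dots> = 0"
    using assms unfolding Hgrp_def by simp
  finally have euler: "euler eul (\<lambda>r. \<Sum>b\<in>B. m b * h b r) = 0" .
  have "bdry bd (\<lambda>r. \<Sum>b\<in>B. m b * h b r) ed = (\<Sum>i\<in>UNIV. (\<Sum>b\<in>B. m b * c b i) * gam i ed)"
    for ed
  proof -
    have "bdry bd (\<lambda>r. \<Sum>b\<in>B. m b * h b r) ed = (\<Sum>b\<in>B. m b * bdry bd (h b) ed)"
      unfolding bdry_def sum_distrib_right sum_distrib_left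
      by (subst sum.swap) (simp add: mult.assoc)
    also have "\<dots> = (\<Sum>b\<in>B. m b * (\<Sum>i\<in>UNIV. c b i * gam i ed))"
      using c by simp
    also have "\<dots> = (\<Sum>i\<in>UNIV. (\<Sum>b\<in>B. m b * c b i) * gam i ed)"
      unfolding sum_distrib_right sum_distrib_left
      by (subst sum.swap) (simp add: mult.assoc)
    finally show ?thesis .
  qed
  then show ?thesis
    unfolding Hgrp_def using euler by (auto intro!: exI[of _ "\<lambda>i. \<Sum>b\<in>B. m b * c b i"])
qed

lemma Hgrp_clear_denominators:
  assumes "finite B" "B \<subseteq> to_real_chain ` Hgrp eul bd gam" "\<forall>b\<in>B. mu b \<in> \<rat>"
  obtains N :: nat and z where "N > 0" "z \<in> Hgrp eul bd gam"
    "to_real_chain z = real N *\<^sub>R (\<Sum>b\<in>B. mu b *\<^sub>R b)"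
proof -
  obtain N :: nat where N: "N > 0" "\<forall>b\<in>B. real N * mu b \<in> \<int>"
    using Rats_common_denominator assms(1,3) by blast
  have "\<forall>b\<in>B. \<exists>k. real N * mu b = of_int k"
    using N(2) by (metis Ints_cases)
  from bchoice[OF this] obtain m where m: "\<forall>b\<in>B. real N * mu b = of_int (m b)"
    by blast
  have "\<forall>b\<in>B. \<exists>k. k \<in> Hgrp eul bd gam \<and> b = to_real_chain k"
    using assms(2) by blast
  from bchoice[OF this] obtain h where h: "\<forall>b\<in>B. h b \<in> Hgrp eul bd gam \<and> b = to_real_chain (h b)"
    by blast
  define z where "z = (\<lambda>r. \<Sum>b\<in>B. m b * h b r)"
  have "z \<in> Hgrp eul bd gam"
    unfolding z_def using h by (intro Hgrp_sum_closed) auto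
  have "b $ r = real_of_int (h b r)" if "b \<in> B" for b r
    using h that unfolding to_real_chain_def by (metis vec_lambda_beta)
  then have "real_of_int (z r) = (\<Sum>b\<in>B. real N * mu b * b $ r)" for r
    unfolding z_def using m by (simp cong: sum.cong)
  then have "to_real_chain z = real N *\<^sub>R (\<Sum>b\<in>B. mu b *\<^sub>R b)"
    by (simp add: vec_eq_iff to_real_chain_def sum_distrib_left mult.assoc)
  then show ?thesis
    using that N(1) \<open>z \<in> Hgrp eul bd gam\<close> by blast
qed

lemma sgn_eq_if_abs_diff_less:
  fixes x y :: real
  assumes "\<bar>y - x\<bar> < \<bar>x\<bar>"
  shows "sgn y = sgn x"
  using assms by (auto simp: sgn_if)

lemma rational_combination_same_signs:
  fixes B :: "(real^'n::finite) set" and lam :: "real^'n \<Rightarrow> real"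
  assumes "finite B" "\<forall>b\<in>B. \<forall>i. b $ i \<in> \<rat>"
  obtains mu where "\<forall>b\<in>B. mu b \<in> \<rat>"
    "\<forall>i. sgn ((\<Sum>b\<in>B. mu b *\<^sub>R b) $ i) = sgn ((\<Sum>b\<in>B. lam b *\<^sub>R b) $ i)"
proof -
  have component: "(\<Sum>b\<in>B. c b *\<^sub>R b) $ i = (\<Sum>b\<in>B. b $ i * c b)" for c i
    by (simp add: sum_component mult.commute)
  define x where "x = (\<Sum>b\<in>B. lam b *\<^sub>R b)"
  \<comment> \<open>The zero coordinates of x are kept by solving equations, the others by a small enough
    error; the 1 inserted below keeps the minimum defined when x = 0.\<close>
  define m where "m = Min (insert 1 ((\<lambda>i. \<bar>x $ i\<bar>) ` {i. x $ i \<noteq> 0}))"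
  have "m > 0"
    unfolding m_def by (subst Min_gr_iff) auto
  have m_le: "m \<le> \<bar>x $ i\<bar>" if "x $ i \<noteq> 0" for i
    unfolding m_def using that by (intro Min.coboundedI) auto
  define K where "K = 1 + (\<Sum>i\<in>UNIV. \<Sum>b\<in>B. \<bar>b $ i\<bar>)"
  have K: "(\<Sum>b\<in>B. \<bar>b $ i\<bar>) \<le> K - 1" for i
    unfolding K_def by (simp, intro member_le_sum) (auto intro: sum_nonneg)
  have "K \<ge> 1"
    unfolding K_def by (simp add: sum_nonneg)
  define E where "E = (\<lambda>i (b :: real^'n). b $ i) ` {i. x $ i = 0}"
  have "\<forall>a\<in>E. \<forall>b\<in>B. a b \<in> \<rat>" "\<forall>a\<in>E. (\<Sum>b\<in>B. a b * lam b) = 0"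
    using assms(2) unfolding E_def x_def component by auto
  moreover have "m / K > 0"
    using \<open>m > 0\<close> \<open>K \<ge> 1\<close> by simp
  ultimately obtain mu where mu: "\<forall>b\<in>B. mu b \<in> \<rat> \<and> \<bar>mu b - lam b\<bar> < m / K"
    "\<forall>a\<in>E. (\<Sum>b\<in>B. a b * mu b) = 0"
    using rational_solutions_dense[OF assms(1)] by blast
  have "sgn ((\<Sum>b\<in>B. mu b *\<^sub>R b) $ i) = sgn (x $ i)" for i
  proof (cases "x $ i = 0")
    case True
    then show ?thesis
      using mu(2) unfolding E_def component by auto
  next
    case False
    have "\<forall>b\<in>B. \<bar>mu b - lam b\<bar> \<le> m / K"
      using mu(1) by (auto intro: less_imp_le)
    then have "\<bar>(\<Sum>b\<in>B. mu b *\<^sub>R b) $ i - x $ i\<bar> \<le> (\<Sum>b\<in>B. \<bar>b $ i\<bar>) * (m / K)"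
      unfolding x_def component by (rule abs_sum_mult_diff_le)
    also have "\<dots> \<le> (K - 1) * (m / K)"
      using K[of i] \<open>m > 0\<close> \<open>K \<ge> 1\<close> by (intro mult_right_mono) auto
    also have "\<dots> < m"
      using \<open>m > 0\<close> \<open>K \<ge> 1\<close> by (simp add: field_simps)
    also have "\<dots> \<le> \<bar>x $ i\<bar>"
      using m_le False .
    finally show ?thesis
      by (rule sgn_eq_if_abs_diff_less)
  qed
  then show ?thesis
    using that mu(1) unfolding x_def by blast
qed

lemma admissible_HR_Int_C2plus:
  assumes "admissible eul bd gam"
  shows "HR eul bd gam \<inter> C2plus = {0}"
proof
  show "{0} \<subseteq> HR eul bd gam \<inter> C2plus"
    by (simp add: HR_def span_zero C2plus_def)
next
  show "HR eul bd gam \<inter> C2plus \<subseteq> {0}"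
  proof
    fix x assume "x \<in> HR eul bd gam \<inter> C2plus"
    then have x_nonneg: "0 \<le> x $ r" for r
      unfolding C2plus_def by blast
    obtain B lam where B: "finite B" "B \<subseteq> to_real_chain ` Hgrp eul bd gam"
      and x: "x = (\<Sum>b\<in>B. lam b *\<^sub>R b)"
      using \<open>x \<in> HR eul bd gam \<inter> C2plus\<close> unfolding HR_def span_explicit by blast
    have "\<forall>b\<in>B. \<forall>i. b $ i \<in> \<rat>"
      using B(2) by (auto simp: to_real_chain_def)
    then obtain mu where mu: "\<forall>b\<in>B. mu b \<in> \<rat>" "\<forall>i. sgn ((\<Sum>b\<in>B. mu b *\<^sub>R b) $ i) = sgn (x $ i)"
      using rational_combination_same_signs[OF B(1), of lam, folded x] by blast
    obtain N z where z: "N > 0" "z \<in> Hgrp eul bd gam"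
      "to_real_chain z = real N *\<^sub>R (\<Sum>b\<in>B. mu b *\<^sub>R b)"
      using Hgrp_clear_denominators[OF B mu(1)] .
    have sgn_z: "sgn (real_of_int (z r)) = sgn (x $ r)" for r
      using arg_cong[OF z(3), of "\<lambda>v. sgn (v $ r)"] mu(2) z(1)
      by (simp add: to_real_chain_def sgn_mult)
    have z_nonneg: "0 \<le> z r" and z_eq_0: "z r = 0 \<longleftrightarrow> x $ r = 0" for r
      using sgn_z[of r] x_nonneg[of r] by (auto simp: sgn_if split: if_splits)
    have "z = (\<lambda>_. 0)"
      using assms z(2) z_nonneg unfolding admissible_def by (meson not_less)
    then show "x \<in> {0}"
      using z_eq_0 by (simp add: vec_eq_iff)
  qed
qed

lemma subspace_negative_part_bound:
  fixes V :: "(real^'n::finite) set"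
  assumes "subspace V" "V \<inter> C2plus = {0}"
  obtains \<delta> where "\<delta> > 0" "\<forall>h\<in>V. \<delta> * norm h \<le> (\<Sum>i\<in>UNIV. max 0 (- h $ i))"
proof -
  define neg where "neg = (\<lambda>h :: real^'n. \<Sum>i\<in>UNIV. max 0 (- h $ i))"
  define T where "T = V \<inter> sphere 0 1"
  have "compact T"
    unfolding T_def using closed_subspace[OF assms(1)] by (intro closed_Int_compact compact_sphere)
  have neg_pos: "neg d > 0" if "d \<in> T" for d
  proof -
    have "d \<in> V" "d \<noteq> 0"
      using that unfolding T_def by auto
    then have "d \<notin> C2plus"
      using assms(2) by (metis IntI singletonD)
    then obtain i where "d $ i < 0"
      unfolding C2plus_def by (auto simp: not_le)
    then have "0 < max 0 (- d $ i)" by simp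
    also have "\<dots> \<le> neg d"
      unfolding neg_def by (rule member_le_sum) auto
    finally show ?thesis .
  qed
  have neg_scale: "neg (c *\<^sub>R h) = c * neg h" if "c \<ge> 0" for c h
    unfolding neg_def sum_distrib_left using that by (simp add: max_mult_distrib_left)
  obtain \<delta> where \<delta>: "\<delta> > 0" "\<forall>d\<in>T. \<delta> \<le> neg d"
  proof (cases "T = {}")
    case True
    then show ?thesis using that[of 1] by simp
  next
    case False
    have "continuous_on T neg"
      unfolding neg_def by (intro continuous_intros)
    then obtain d0 where "d0 \<in> T" "\<forall>d\<in>T. neg d0 \<le> neg d"
      using continuous_attains_inf[OF \<open>compact T\<close> False] by blast
    then show ?thesis
      using that neg_pos by blast
  qed
  have "\<delta> * norm h \<le> neg h" if "h \<in> V" for h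
  proof (cases "h = 0")
    case True
    then show ?thesis by (simp add: neg_def)
  next
    case False
    then have "(1 / norm h) *\<^sub>R h \<in> T"
      using \<open>h \<in> V\<close> subspace_scale[OF assms(1)] by (auto simp: T_def)
    then have "\<delta> \<le> neg h / norm h"
      using \<delta>(2) neg_scale[of "1 / norm h" h] by auto
    then show ?thesis
      using False by (simp add: field_simps)
  qed
  then show ?thesis
    using that \<delta>(1) unfolding neg_def by blast
qed

lemma compact_translation_subspace_Int_C2plus:
  fixes V :: "(real^'n::finite) set"
  assumes "subspace V" "V \<inter> C2plus = {0}"
  shows "compact ((\<lambda>h. u + h) ` V \<inter> C2plus)"
proof -
  obtain \<delta> where \<delta>: "\<delta> > 0" "\<forall>h\<in>V. \<delta> * norm h \<le> (\<Sum>i\<in>UNIV. max 0 (- h $ i))"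
    using subspace_negative_part_bound[OF assms] .
  have "closed ((\<lambda>h. u + h) ` V \<inter> C2plus)"
    using closed_translation[OF closed_subspace[OF assms(1)]] closed_positive_orthant
    unfolding C2plus_def by (intro closed_Int) auto
  moreover have "bounded ((\<lambda>h. u + h) ` V \<inter> C2plus)"
    unfolding bounded_iff
  proof (intro exI ballI)
    fix x assume "x \<in> (\<lambda>h. u + h) ` V \<inter> C2plus"
    then obtain h where h: "h \<in> V" "x = u + h" "\<forall>i. 0 \<le> u $ i + h $ i"
      unfolding C2plus_def by auto
    have "\<delta> * norm h \<le> (\<Sum>i\<in>UNIV. max 0 (- h $ i))"
      using \<delta>(2) h(1) by blast
    also have "\<dots> \<le> (\<Sum>i\<in>UNIV. \<bar>u $ i\<bar>)"
    proof (rule sum_mono)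
      fix i
      show "max 0 (- h $ i) \<le> \<bar>u $ i\<bar>"
        using h(3)[rule_format, of i] by (auto simp: max_def abs_if)
    qed
    finally have "\<delta> * norm h \<le> (\<Sum>i\<in>UNIV. \<bar>u $ i\<bar>)" .
    then have "norm h \<le> (\<Sum>i\<in>UNIV. \<bar>u $ i\<bar>) / \<delta>"
      using \<delta>(1) by (simp add: field_simps)
    then show "norm x \<le> norm u + (\<Sum>i\<in>UNIV. \<bar>u $ i\<bar>) / \<delta>"
      using norm_triangle_ineq[of u h] unfolding h(2) by linarith
  qed
  ultimately show ?thesis
    by (simp add: compact_eq_bounded_closed)
qed

theorem proposition3p4:
  fixes eul :: "'r::finite \<Rightarrow> real"
    and bd :: "'r \<Rightarrow> 'e::finite \<Rightarrow> int"
    and gam :: "'i::finite \<Rightarrow> 'e \<Rightarrow> int"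
    and u :: "real^'r"
  assumes "admissible eul bd gam"
    and "u \<in> C2plus"
  shows "compact ((\<lambda>h. u + h) ` HR eul bd gam \<inter> C2plus)"
proof (rule compact_translation_subspace_Int_C2plus)
  show "subspace (HR eul bd gam)"
    unfolding HR_def by (rule subspace_span)
  show "HR eul bd gam \<inter> C2plus = {0}"
    using assms(1) by (rule admissible_HR_Int_C2plus)
qed

end
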